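(* Let $X$ be a separable Banach space over $\mathbb{K}\in\{\mathbb{R},\mathbb{C}\}$ and $T\colon X\to X$ a bounded linear operator. If there exists a uniformly Li-Yorke scrambled subset of $X$ which has the Baire property and is of second category, then the whole space $X$ is uniformly Li-Yorke scrambled for $T$.
   Context: A subset $S\subset X$ with at least two points is uniformly Li-Yorke scrambled for $T$ if there exist sequences $\{p_n\}$, $\{q_n\}$ in $\mathbb{N}$ such that for all distinct $x,y\in S$: $\lim_n\|T^{p_n}x-T^{p_n}y\|=0$ and $\lim_n\|T^{q_n}x-T^{q_n}y\|=\infty$. A set is of first category if its complement contains a dense $G_\delta$ set, and of second category otherwise. Sets with the Baire property form the smallest $\sigma$-algebra containing all open sets and all sets of first category. *)

theory Defs
  imports "HOL-Analysis.Analysis"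
begin

definition first_category :: "'a::topological_space set \<Rightarrow> bool" where
  "first_category A \<longleftrightarrow> (\<exists>G. gdelta G \<and> closure G = UNIV \<and> G \<subseteq> - A)"

definition second_category :: "'a::topological_space set \<Rightarrow> bool" where
  "second_category A \<longleftrightarrow> \<not> first_category A"

definition has_baire_property :: "'a::topological_space set \<Rightarrow> bool" where
  "has_baire_property A \<longleftrightarrow>
     A \<in> sigma_sets UNIV ({S. open S} \<union> {S. first_category S})"

definition separable_space :: "'a::topological_space itself \<Rightarrow> bool" where
  "separable_space _ \<longleftrightarrow> (\<exists>D::'a set. countable D \<and> closure D = UNIV)"

definition unif_li_yorke_scrambled ::
    "('a::real_normed_vector \<Rightarrow> 'a) \<Rightarrow> 'a set \<Rightarrow> bool" where
  "unif_li_yorke_scrambled T S \<longleftrightarrow>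
     (\<exists>x\<in>S. \<exists>y\<in>S. x \<noteq> y) \<and>
     (\<exists>p q :: nat \<Rightarrow> nat. \<forall>x\<in>S. \<forall>y\<in>S. x \<noteq> y \<longrightarrow>
        ((\<lambda>n. norm ((T ^^ p n) x - (T ^^ p n) y)) \<longlonglongrightarrow> 0) \<and>
        filterlim (\<lambda>n. norm ((T ^^ q n) x - (T ^^ q n) y)) at_top sequentially)"

end

theory Submission
  imports Defs
begin

text \<open>A set with the Baire property that is of second category is comeager in some ball
  \<open>ball x\<^sub>0 r\<close>. Then for every \<open>w\<close> with \<open>norm w < r\<close> the comeager sets \<open>S\<close> and \<open>w + S\<close> must meet
  in the nonempty open set \<open>ball x\<^sub>0 (r - norm w)\<close>, so \<open>S - S\<close> contains \<open>ball 0 r\<close> (Pettis).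
  Hence every nonzero vector \<open>x - y\<close> is a positive multiple of a difference \<open>u - v\<close> of distinct
  points of \<open>S\<close>, and by linearity the orbits of \<open>x, y\<close> approach and separate along the same
  time sequences as those of \<open>u, v\<close>.\<close>

text \<open>Unlike \<^const>\<open>first_category\<close>, this form is closed under countable unions without
  appeal to the Baire category theorem.\<close>
definition meager :: "'a::topological_space set \<Rightarrow> bool" where
  "meager A \<longleftrightarrow>
     (\<exists>\<G>. countable \<G> \<and> (\<forall>V\<in>\<G>. open V \<and> closure V = UNIV) \<and> A \<inter> \<Inter>\<G> = {})"

lemma first_category_imp_meager: "first_category A \<Longrightarrow> meager A"
proof -
  assume "first_category A"
  then obtain G where G: "gdelta G" "closure G = UNIV" "G \<subseteq> - A"
    unfolding first_category_def by blast
  from G(1) obtain F :: "nat \<Rightarrow> _" where F: "\<And>n. open (F n)" "G = \<Inter>(range F)"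
    by (cases rule: gdelta.cases) blast
  have "closure (F n) = UNIV" for n
    using G(2) F(2) closure_mono[of G "F n"] by blast
  with F G(3) show ?thesis
    unfolding meager_def by (intro exI[of _ "range F"]) auto
qed

lemma Baire_closure_Inter_dense_open:
  fixes \<G> :: "'a::complete_space set set"
  assumes "countable \<G>" "\<forall>V\<in>\<G>. open V \<and> closure V = UNIV"
  shows "closure (\<Inter>\<G>) = UNIV"
  using Baire_category[of euclidean \<G>] completely_metrizable_space_euclidean assms by auto

lemma meager_imp_first_category:
  fixes A :: "'a::complete_space set"
  assumes "meager A"
  shows "first_category A"
proof -
  obtain \<G> where \<G>: "countable \<G>" "\<forall>V\<in>\<G>. open V \<and> closure V = UNIV" "A \<inter> \<Inter>\<G> = {}"
    using assms unfolding meager_def by blast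
  have dense: "closure (\<Inter>\<G>) = UNIV"
    using \<G>(1,2) by (rule Baire_closure_Inter_dense_open)
  have "gdelta (\<Inter>\<G>)"
  proof (cases "\<G> = {}")
    case True
    then have "\<Inter>\<G> = \<Inter>(range (\<lambda>n::nat. UNIV::'a set))" by simp
    then show ?thesis by (metis gdelta.intros open_UNIV)
  next
    case False
    then have "\<G> = range (from_nat_into \<G>)"
      using \<G>(1) by (simp add: range_from_nat_into)
    moreover have "open (from_nat_into \<G> n)" for n
      using \<G>(2) False from_nat_into by blast
    ultimately show ?thesis by (metis gdelta.intros)
  qed
  with dense \<G>(3) show ?thesis
    unfolding first_category_def by (intro exI[of _ "\<Inter>\<G>"]) blast
qed

lemma meager_subset:
  assumes "meager A" "B \<subseteq> A"
  shows "meager B"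
proof -
  obtain \<G> where "countable \<G>" "\<forall>V\<in>\<G>. open V \<and> closure V = UNIV" "A \<inter> \<Inter>\<G> = {}"
    using assms(1) unfolding meager_def by blast
  with assms(2) show ?thesis
    unfolding meager_def by (intro exI[of _ \<G>]) blast
qed

lemma meager_Un: "meager A \<Longrightarrow> meager B \<Longrightarrow> meager (A \<union> B)"
proof -
  assume "meager A" "meager B"
  then obtain \<F> \<G> where
    "countable \<F>" "\<forall>V\<in>\<F>. open V \<and> closure V = UNIV" "A \<inter> \<Inter>\<F> = {}"
    "countable \<G>" "\<forall>V\<in>\<G>. open V \<and> closure V = UNIV" "B \<inter> \<Inter>\<G> = {}"
    unfolding meager_def by blast
  then show ?thesis
    unfolding meager_def by (intro exI[of _ "\<F> \<union> \<G>"]) auto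
qed

lemma meager_UN:
  assumes "\<And>n::nat. meager (A n)"
  shows "meager (\<Union>n. A n)"
proof -
  obtain \<G> where \<G>: "\<And>n. countable (\<G> n) \<and> (\<forall>V\<in>\<G> n. open V \<and> closure V = UNIV) \<and>
                          A n \<inter> \<Inter>(\<G> n) = {}"
    using assms unfolding meager_def by metis
  show ?thesis
    unfolding meager_def
    by (intro exI[of _ "\<Union>n. \<G> n"]) (use \<G> in \<open>auto simp: set_eq_iff; blast\<close>)
qed

lemma meager_translation:
  fixes A :: "'a::real_normed_vector set"
  assumes "meager A"
  shows "meager ((+) a ` A)"
proof -
  obtain \<G> where \<G>: "countable \<G>" "\<forall>V\<in>\<G>. open V \<and> closure V = UNIV" "A \<inter> \<Inter>\<G> = {}"
    using assms unfolding meager_def by blast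
  have surj: "(+) a ` UNIV = (UNIV :: 'a set)"
    by (metis surj_def add_diff_cancel_left' diff_add_cancel)
  have "open ((+) a ` V) \<and> closure ((+) a ` V) = UNIV" if "V \<in> \<G>" for V
    using that \<G>(2) open_translation[of V a] closure_translation[of a V] surj by auto
  moreover have "(+) a ` A \<inter> \<Inter>((`) ((+) a) ` \<G>) = {}"
    using \<G>(3) by (auto simp: image_iff)
  ultimately show ?thesis
    unfolding meager_def using \<G>(1) by (intro exI[of _ "(`) ((+) a) ` \<G>"]) auto
qed

lemma closed_empty_interior_imp_meager:
  assumes "closed C" "interior C = {}"
  shows "meager C"
  unfolding meager_def
  by (intro exI[of _ "{- C}"]) (use assms in \<open>auto simp: closure_complement\<close>)

lemma nonempty_open_not_meager:
  fixes U :: "'a::complete_space set"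
  assumes "open U" "U \<noteq> {}"
  shows "\<not> meager U"
proof
  assume "meager U"
  then obtain \<G> where \<G>: "countable \<G>" "\<forall>V\<in>\<G>. open V \<and> closure V = UNIV" "U \<inter> \<Inter>\<G> = {}"
    unfolding meager_def by blast
  have "closure (\<Inter>\<G>) = UNIV"
    using \<G>(1,2) by (rule Baire_closure_Inter_dense_open)
  with assms \<G>(3) show False
    using open_Int_closure_eq_empty[of U "\<Inter>\<G>"] by auto
qed

lemma has_baire_property_imp_open_approximation:
  assumes "has_baire_property A"
  shows "\<exists>U. open U \<and> meager ((A - U) \<union> (U - A))"
  using assms unfolding has_baire_property_def
proof (induction rule: sigma_sets.induct)
  case (Basic A)
  then show ?case
  proof
    assume "A \<in> {S. open S}"
    then show ?thesis by (intro exI[of _ A]) (auto simp: meager_def)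
  next
    assume "A \<in> {S. first_category S}"
    then show ?thesis using first_category_imp_meager by (intro exI[of _ "{}"]) auto
  qed
next
  case Empty
  show ?case by (intro exI[of _ "{}"]) (auto simp: meager_def)
next
  case (Compl A)
  then obtain U where U: "open U" "meager ((A - U) \<union> (U - A))" by blast
  let ?V = "interior (- U)"
  have "closed (- U - ?V)"
    using U(1) by (intro closed_Diff open_interior) auto
  moreover have "interior (- U - ?V) = {}"
    using closure_subset[of ?V] by (auto simp: interior_diff)
  ultimately have "meager (- U - ?V)"
    by (rule closed_empty_interior_imp_meager)
  with U(2) have "meager (((A - U) \<union> (U - A)) \<union> (- U - ?V))"
    by (rule meager_Un)
  then have "meager (((UNIV - A) - ?V) \<union> (?V - (UNIV - A)))"
    by (rule meager_subset) (use interior_subset[of "- U"] in auto)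
  then show ?case by (intro exI[of _ ?V]) auto
next
  case (Union A)
  then obtain U where U: "\<And>i. open (U i)" "\<And>i. meager ((A i - U i) \<union> (U i - A i))"
    by metis
  have "meager (\<Union>i. (A i - U i) \<union> (U i - A i))"
    using U(2) by (rule meager_UN)
  then have "meager ((\<Union>(range A) - \<Union>(range U)) \<union> (\<Union>(range U) - \<Union>(range A)))"
    by (rule meager_subset) auto
  then show ?case using U(1) by (intro exI[of _ "\<Union>(range U)"]) auto
qed

lemma second_category_baire_property_imp_comeager_ball:
  fixes S :: "'a::{complete_space,real_normed_vector} set"
  assumes "has_baire_property S" "second_category S"
  shows "\<exists>x\<^sub>0 r. r > 0 \<and> meager (ball x\<^sub>0 r - S)"
proof -
  obtain U where U: "open U" "meager ((S - U) \<union> (U - S))"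
    using has_baire_property_imp_open_approximation[OF assms(1)] by blast
  have "U \<noteq> {}"
  proof
    assume "U = {}"
    with U(2) have "meager S" by simp
    with assms(2) show False
      unfolding second_category_def using meager_imp_first_category by blast
  qed
  then obtain x\<^sub>0 where "x\<^sub>0 \<in> U" by blast
  with U(1) obtain r where r: "r > 0" "ball x\<^sub>0 r \<subseteq> U"
    by (meson open_contains_ball)
  from U(2) have "meager (ball x\<^sub>0 r - S)"
    by (rule meager_subset) (use r(2) in blast)
  with r(1) show ?thesis by blast
qed

lemma comeager_ball_imp_ball_subset_differences:
  fixes S :: "'a::{complete_space,real_normed_vector} set"
  assumes "meager (ball x\<^sub>0 r - S)"
  shows "ball 0 r \<subseteq> {u - v | u v. u \<in> S \<and> v \<in> S}"
proof
  fix w :: 'a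
  assume "w \<in> ball 0 r"
  then have w: "norm w < r" by simp
  let ?B = "ball x\<^sub>0 (r - norm w)"
  show "w \<in> {u - v | u v. u \<in> S \<and> v \<in> S}"
  proof (rule ccontr)
    assume w_notin: "w \<notin> {u - v | u v. u \<in> S \<and> v \<in> S}"
    have "?B \<subseteq> (ball x\<^sub>0 r - S) \<union> (+) w ` (ball x\<^sub>0 r - S)"
    proof
      fix y
      assume "y \<in> ?B"
      moreover have "dist x\<^sub>0 (y - w) \<le> dist x\<^sub>0 y + norm w"
        using dist_triangle[of x\<^sub>0 "y - w" y] by (simp add: dist_norm)
      moreover have "norm w \<ge> 0" by simp
      ultimately have y: "y \<in> ball x\<^sub>0 r" "y - w \<in> ball x\<^sub>0 r"
        unfolding mem_ball by linarith+
      have "y - (y - w) = w" by simp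
      then have "y \<notin> S \<or> y - w \<notin> S"
        using w_notin by fastforce
      moreover have "y = w + (y - w)" by simp
      ultimately show "y \<in> (ball x\<^sub>0 r - S) \<union> (+) w ` (ball x\<^sub>0 r - S)"
        using y by blast
    qed
    moreover have "meager ((ball x\<^sub>0 r - S) \<union> (+) w ` (ball x\<^sub>0 r - S))"
      using assms by (intro meager_Un meager_translation)
    ultimately have "meager ?B" by (rule meager_subset[rotated])
    moreover have "x\<^sub>0 \<in> ?B" using w by simp
    ultimately show False using nonempty_open_not_meager[of ?B] by blast
  qed
qed

lemma linear_funpow:
  fixes T :: "'a::real_vector \<Rightarrow> 'a"
  assumes "linear T"
  shows "linear (T ^^ n)"
proof (induction n)
  case 0
  show ?case by (simp add: real_vector.linear_ident)
next
  case (Suc n)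
  then show ?case using linear_compose[OF _ assms] by (simp add: comp_def)
qed

lemma ball_subset_imp_scaleR_mem:
  fixes D :: "'a::real_normed_vector set"
  assumes "r > 0" "ball 0 r \<subseteq> D"
  shows "\<exists>c>0. c *\<^sub>R z \<in> D"
proof -
  define c where "c = r / (norm z + 1)"
  have pos: "norm z + 1 > 0" using norm_ge_zero[of z] by linarith
  then have "c > 0" using assms(1) by (simp add: c_def)
  have "norm (c *\<^sub>R z) = r * norm z / (norm z + 1)"
    using assms(1) pos by (simp add: c_def)
  also have "\<dots> < r" using assms(1) pos by (simp add: field_simps)
  finally have "c *\<^sub>R z \<in> ball 0 r" by simp
  with \<open>c > 0\<close> assms(2) show ?thesis by blast
qed

lemma unif_li_yorke_scrambled_UNIV_if_absorbing_differences:
  fixes T :: "'a::real_normed_vector \<Rightarrow> 'a"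
  assumes "linear T" "unif_li_yorke_scrambled T S"
    and absorbing: "\<And>z. \<exists>c>0. c *\<^sub>R z \<in> {u - v | u v. u \<in> S \<and> v \<in> S}"
  shows "unif_li_yorke_scrambled T UNIV"
proof -
  obtain p q where pq: "\<And>u v. u \<in> S \<Longrightarrow> v \<in> S \<Longrightarrow> u \<noteq> v \<Longrightarrow>
      ((\<lambda>n. norm ((T ^^ p n) u - (T ^^ p n) v)) \<longlonglongrightarrow> 0) \<and>
      filterlim (\<lambda>n. norm ((T ^^ q n) u - (T ^^ q n) v)) at_top sequentially"
    using assms(2) unfolding unif_li_yorke_scrambled_def by blast
  have "((\<lambda>n. norm ((T ^^ p n) x - (T ^^ p n) y)) \<longlonglongrightarrow> 0) \<and>
      filterlim (\<lambda>n. norm ((T ^^ q n) x - (T ^^ q n) y)) at_top sequentially"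
    if "x \<noteq> y" for x y
  proof -
    obtain c u v where c: "c > 0" and uv: "u \<in> S" "v \<in> S" "u - v = c *\<^sub>R (x - y)"
      using absorbing[of "x - y"] by force
    have "u \<noteq> v" using c uv(3) \<open>x \<noteq> y\<close> by auto
    have scale: "norm ((T ^^ n) x - (T ^^ n) y) = inverse c * norm ((T ^^ n) u - (T ^^ n) v)"
      for n
      using linear_funpow[OF assms(1), of n] c uv(3)
      by (simp add: linear_diff[symmetric] linear_scale)
    have "(\<lambda>n. inverse c * norm ((T ^^ p n) u - (T ^^ p n) v)) \<longlonglongrightarrow> inverse c * 0"
      using pq[OF uv(1,2) \<open>u \<noteq> v\<close>] by (intro tendsto_mult tendsto_const) auto
    moreover have
      "filterlim (\<lambda>n. inverse c * norm ((T ^^ q n) u - (T ^^ q n) v)) at_top sequentially"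
      using pq[OF uv(1,2) \<open>u \<noteq> v\<close>] c
      by (intro filterlim_tendsto_pos_mult_at_top[OF tendsto_const]) auto
    ultimately show ?thesis by (simp add: scale)
  qed
  moreover have "\<exists>x y :: 'a. x \<noteq> y"
    using assms(2) unfolding unif_li_yorke_scrambled_def by blast
  ultimately show ?thesis
    unfolding unif_li_yorke_scrambled_def by blast
qed

theorem corollary3p13:
  fixes T :: "'a::banach \<Rightarrow> 'a"
  assumes "separable_space TYPE('a)"
    and "bounded_linear T"
    and "\<exists>S. unif_li_yorke_scrambled T S \<and> has_baire_property S \<and> second_category S"
  shows "unif_li_yorke_scrambled T UNIV"
proof -
  obtain S where S: "unif_li_yorke_scrambled T S" "has_baire_property S" "second_category S"
    using assms(3) by blast
  obtain x\<^sub>0 r where r: "r > 0" "meager (ball x\<^sub>0 r - S)"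
    using second_category_baire_property_imp_comeager_ball[OF S(2,3)] by blast
  have "ball 0 r \<subseteq> {u - v | u v. u \<in> S \<and> v \<in> S}"
    using r(2) by (rule comeager_ball_imp_ball_subset_differences)
  with r(1) have "\<exists>c>0. c *\<^sub>R z \<in> {u - v | u v. u \<in> S \<and> v \<in> S}" for z :: 'a
    by (rule ball_subset_imp_scaleR_mem)
  with bounded_linear.linear[OF assms(2)] S(1) show ?thesis
    by (rule unif_li_yorke_scrambled_UNIV_if_absorbing_differences)
qed

end
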